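(* Let $\Phi=(A;\{E_i\}_{i=0}^d;A^*;\{E^*_i\}_{i=0}^d)$ be a tridiagonal system on $V$ with $d\ge1$, such that $(A,A^* )$ satisfies the $q$-Serre relations, with $E_iV$ the eigenspace of $A$ for $\theta_i=q^{2i-d}$ and $E^*_iV$ the eigenspace of $A^*$ for $\theta^*_i=q^{d-2i}$. Let $\{U_i\}_{i=0}^d$ be its split decomposition and $K:V\to V$ the linear map acting on $U_i$ as $q^{d-2i}I$. Then $$\frac{qKA-q^{-1}AK}{q-q^{-1}}=I,\qquad \frac{qK^{-1}A^*-q^{-1}A^*K^{-1}}{q-q^{-1}}=I.$$
   Context: $\mathcal K$ is an algebraically closed field; $V$ is a nonzero finite-dimensional vector space over $\mathcal K$; $q\in\mathcal K$ is nonzero and not a root of unity; $[3]_q=q^2+1+q^{-2}$. The $q$-Serre relations for $(X,Y)$: $X^3Y-[3]_qX^2YX+[3]_qXYX^2-YX^3=0$ and $Y^3X-[3]_qY^2XY+[3]_qYXY^2-XY^3=0$. Primitive idempotent of a diagonalizable $X$ for eigenvalue $\lambda_i$: $\prod_{j\ne i}\frac{X-\lambda_jI}{\lambda_i-\lambda_j}$. A tridiagonal system on $V$ is a sequence $(A;\{E_i\}_{i=0}^d;A^*;\{E^*_i\}_{i=0}^d)$ with $A,A^*$ diagonalizable, $\{E_i\}$, $\{E^*_i\}$ orderings of their primitive idempotents, $E_iA^*E_j=0$ and $E^*_iAE^*_j=0$ when $|i-j|>1$, and no subspaces other than $0,V$ invariant under both $A$ and $A^*$. Split decomposition: $U_i=(E^*_0V+\cdots+E^*_iV)\cap(E_iV+\cdots+E_dV)$;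 known: $V=U_0\oplus\cdots\oplus U_d$, $(A-\theta_iI)U_i\subseteq U_{i+1}$, $(A^*-\theta^*_iI)U_i\subseteq U_{i-1}$ ($U_{-1}=U_{d+1}=0$). *)

theory Defs
  imports "Jordan_Normal_Form.Jordan_Normal_Form" "HOL-Computational_Algebra.Polynomial"
begin

text \<open>Vector space V is modelled as K^n (n = dim V), linear maps as n x n matrices.\<close>

definition alg_closed_field :: "'a::field itself \<Rightarrow> bool" where
  "alg_closed_field _ \<longleftrightarrow> (\<forall>p::'a poly. degree p > 0 \<longrightarrow> (\<exists>x. poly p x = 0))"

definition diagonalizable :: "'a::field mat \<Rightarrow> bool" where
  "diagonalizable A \<longleftrightarrow> (\<exists>D. similar_mat A D \<and> diagonal_mat D)"

definition mat_prod_list :: "nat \<Rightarrow> ('i \<Rightarrow> 'a::field mat) \<Rightarrow> 'i list \<Rightarrow> 'a mat" where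
  "mat_prod_list n f xs = foldr (\<lambda>j M. f j * M) xs (1\<^sub>m n)"

definition prim_idem :: "nat \<Rightarrow> 'a::field mat \<Rightarrow> (nat \<Rightarrow> 'a) \<Rightarrow> nat \<Rightarrow> nat \<Rightarrow> 'a mat" where
  "prim_idem n X th d i =
     mat_prod_list n (\<lambda>j. (1 / (th i - th j)) \<cdot>\<^sub>m (X - th j \<cdot>\<^sub>m 1\<^sub>m n))
       (filter (\<lambda>j. j \<noteq> i) [0..<Suc d])"

definition subspace_of :: "nat \<Rightarrow> 'a::field vec set \<Rightarrow> bool" where
  "subspace_of n W \<longleftrightarrow> W \<subseteq> carrier_vec n \<and> 0\<^sub>v n \<in> W \<and>
     (\<forall>u\<in>W. \<forall>w\<in>W. u + w \<in> W) \<and> (\<forall>c. \<forall>u\<in>W. c \<cdot>\<^sub>v u \<in> W)"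

definition invariant_under :: "nat \<Rightarrow> 'a::field mat \<Rightarrow> 'a vec set \<Rightarrow> bool" where
  "invariant_under n M W \<longleftrightarrow> (\<forall>w\<in>W. M *\<^sub>v w \<in> W)"

definition mat_image :: "nat \<Rightarrow> 'a::field mat \<Rightarrow> 'a vec set" where
  "mat_image n M = {M *\<^sub>v v | v. v \<in> carrier_vec n}"

fun subspace_sum :: "nat \<Rightarrow> (nat \<Rightarrow> 'a::field vec set) \<Rightarrow> nat list \<Rightarrow> 'a vec set" where
  "subspace_sum n W [] = {0\<^sub>v n}"
| "subspace_sum n W (j # js) = {w + u | w u. w \<in> W j \<and> u \<in> subspace_sum n W js}"

definition tridiagonal_system ::
  "nat \<Rightarrow> nat \<Rightarrow> 'a::field mat \<Rightarrow> (nat \<Rightarrow> 'a) \<Rightarrow> 'a mat \<Rightarrow> (nat \<Rightarrow> 'a) \<Rightarrow> bool" where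
  "tridiagonal_system n d A th As ths \<longleftrightarrow>
     A \<in> carrier_mat n n \<and> As \<in> carrier_mat n n \<and>
     diagonalizable A \<and> diagonalizable As \<and>
     inj_on th {0..d} \<and> inj_on ths {0..d} \<and>
     {e. eigenvalue A e} = th ` {0..d} \<and> {e. eigenvalue As e} = ths ` {0..d} \<and>
     (\<forall>i\<le>d. \<forall>j\<le>d. i + 1 < j \<or> j + 1 < i \<longrightarrow>
        prim_idem n A th d i * As * prim_idem n A th d j = 0\<^sub>m n n) \<and>
     (\<forall>i\<le>d. \<forall>j\<le>d. i + 1 < j \<or> j + 1 < i \<longrightarrow>
        prim_idem n As ths d i * A * prim_idem n As ths d j = 0\<^sub>m n n) \<and>
     (\<forall>W. subspace_of n W \<and> invariant_under n A W \<and> invariant_under n As W \<longrightarrow>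
        W = {0\<^sub>v n} \<or> W = carrier_vec n)"

definition split_component ::
  "nat \<Rightarrow> nat \<Rightarrow> 'a::field mat \<Rightarrow> (nat \<Rightarrow> 'a) \<Rightarrow> 'a mat \<Rightarrow> (nat \<Rightarrow> 'a) \<Rightarrow> nat \<Rightarrow> 'a vec set" where
  "split_component n d A th As ths i =
     subspace_sum n (\<lambda>j. mat_image n (prim_idem n As ths d j)) [0..<Suc i] \<inter>
     subspace_sum n (\<lambda>j. mat_image n (prim_idem n A th d j)) [i..<Suc d]"

definition q_serre :: "nat \<Rightarrow> 'a::field \<Rightarrow> 'a mat \<Rightarrow> 'a mat \<Rightarrow> bool" where
  "q_serre n q X Y \<longleftrightarrow> (let c = q^2 + 1 + inverse (q^2) in
     X*X*X*Y - c \<cdot>\<^sub>m (X*X*Y*X) + c \<cdot>\<^sub>m (X*Y*X*X) - Y*X*X*X = 0\<^sub>m n n \<and>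
     Y*Y*Y*X - c \<cdot>\<^sub>m (Y*Y*X*Y) + c \<cdot>\<^sub>m (Y*X*Y*Y) - X*Y*Y*Y = 0\<^sub>m n n)"

end

theory Submission
  imports Defs
begin

text \<open>
  On the split component \<open>U\<^sub>i\<close>, \<open>A\<close> acts as \<open>\<theta>\<^sub>i\<close> plus a map into \<open>U\<^sub>i\<^sub>+\<^sub>1\<close>
  and \<open>A\<^sup>*\<close> acts as \<open>\<theta>\<^sup>*\<^sub>i\<close> plus a map into \<open>U\<^sub>i\<^sub>-\<^sub>1\<close>; both come from the tridiagonal
  shape of each matrix relative to the primitive idempotents of the other. Writing
  \<open>A u = \<theta>\<^sub>i u + w\<close> with \<open>w \<in> U\<^sub>i\<^sub>+\<^sub>1\<close>, the relations \<open>\<theta>\<^sub>i \<theta>\<^sup>*\<^sub>i = 1\<close> and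
  \<open>q \<theta>\<^sup>*\<^sub>i\<^sub>+\<^sub>1 = q\<^sup>-\<^sup>1 \<theta>\<^sup>*\<^sub>i\<close> give
  \<open>(q K A - q\<^sup>-\<^sup>1 A K) u = (q - q\<^sup>-\<^sup>1) u + (q \<theta>\<^sup>*\<^sub>i\<^sub>+\<^sub>1 - q\<^sup>-\<^sup>1 \<theta>\<^sup>*\<^sub>i) w = (q - q\<^sup>-\<^sup>1) u\<close>,
  and symmetrically for \<open>K\<^sup>-\<^sup>1\<close> and \<open>A\<^sup>*\<close>. The \<open>U\<^sub>i\<close> span \<open>V\<close>: their sum is invariant
  under \<open>A\<close> and \<open>A\<^sup>*\<close> and contains a \<open>\<theta>\<^sup>*\<^sub>0\<close>-eigenvector of \<open>A\<^sup>*\<close>, so irreducibility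
  forces it to be all of \<open>V\<close>.
\<close>

lemma smult_mat_mult_vec:
  "M \<in> carrier_mat n m \<Longrightarrow> v \<in> carrier_vec m \<Longrightarrow> (c \<cdot>\<^sub>m M) *\<^sub>v v = c \<cdot>\<^sub>v (M *\<^sub>v (v :: 'a::field vec))"
  by (intro eq_vecI) (auto simp: scalar_prod_def sum_distrib_left ac_simps)

lemma mat_eq_on_basis:
  assumes P: "P \<in> carrier_mat n n" "Q \<in> carrier_mat n n" "P * Q = 1\<^sub>m n"
    and M: "M \<in> carrier_mat n n" "N \<in> carrier_mat n n"
    and eq: "\<And>k. k < n \<Longrightarrow> M *\<^sub>v col P k = N *\<^sub>v col P k"
  shows "M = (N :: 'a::field mat)"
proof -
  have "M * P = N * P"
  proof (rule mat_col_eqI)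
    fix k assume "k < dim_col (N * P)"
    then have k: "k < n" using P M by simp
    show "col (M * P) k = col (N * P) k"
      using col_mult2[OF M(1) P(1) k] col_mult2[OF M(2) P(1) k] eq[OF k] by simp
  qed (use P M in simp_all)
  then have "M * P * Q = N * P * Q" by simp
  then show ?thesis using P M by (simp add: assoc_mult_mat[of _ n n _ n _ n])
qed

lemma mult_mat_vec_zero: "M \<in> carrier_mat n m \<Longrightarrow> M *\<^sub>v 0\<^sub>v m = (0\<^sub>v n :: 'a::field vec)"
  by (intro eq_vecI) auto

lemma inverse_mat_mult_eigenvector:
  assumes K: "K \<in> carrier_mat n n" and Kinv: "Kinv \<in> carrier_mat n n" and "Kinv * K = 1\<^sub>m n"
    and u: "u \<in> carrier_vec n" and Ku: "K *\<^sub>v u = c \<cdot>\<^sub>v u" and c: "c \<noteq> 0"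
  shows "Kinv *\<^sub>v u = inverse c \<cdot>\<^sub>v (u :: 'a::field vec)"
proof -
  have "u = (Kinv * K) *\<^sub>v u" using assms by simp
  also have "\<dots> = c \<cdot>\<^sub>v (Kinv *\<^sub>v u)" using assoc_mult_mat_vec[OF Kinv K u] Ku mult_mat_vec[OF Kinv u] by simp
  finally have "inverse c \<cdot>\<^sub>v u = inverse c \<cdot>\<^sub>v (c \<cdot>\<^sub>v (Kinv *\<^sub>v u))" by simp
  also have "\<dots> = Kinv *\<^sub>v u" using c Kinv u by (intro eq_vecI) auto
  finally show ?thesis ..
qed

lemma q_commutator_mult_vec:
  fixes q q' \<theta> \<mu> :: "'a::field"
  assumes M: "M \<in> carrier_mat n n" and N: "N \<in> carrier_mat n n" and u: "u \<in> carrier_vec n"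
    and Nu: "N *\<^sub>v u = \<mu> \<cdot>\<^sub>v u" and inv: "\<theta> * \<mu> = 1" and qq': "q \<noteq> q'"
    and rest: "q \<cdot>\<^sub>v (N *\<^sub>v (M *\<^sub>v u - \<theta> \<cdot>\<^sub>v u)) = (q' * \<mu>) \<cdot>\<^sub>v (M *\<^sub>v u - \<theta> \<cdot>\<^sub>v u)"
  shows "((1 / (q - q')) \<cdot>\<^sub>m (q \<cdot>\<^sub>m (N * M) - q' \<cdot>\<^sub>m (M * N))) *\<^sub>v u = u"
proof -
  define w where "w = M *\<^sub>v u - \<theta> \<cdot>\<^sub>v u"
  have w: "w \<in> carrier_vec n" using M u by (simp add: w_def)
  have Mu: "M *\<^sub>v u = \<theta> \<cdot>\<^sub>v u + w" using M u by (intro eq_vecI) (auto simp: w_def)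
  have NMu: "N *\<^sub>v (M *\<^sub>v u) = u + N *\<^sub>v w"
    using N u w Nu inv
    by (simp add: Mu mult_add_distrib_mat_vec[OF N _ w] mult_mat_vec smult_smult_assoc)
  have MNu: "M *\<^sub>v (N *\<^sub>v u) = u + \<mu> \<cdot>\<^sub>v w"
    using M u w inv by (intro eq_vecI) (auto simp: Nu mult_mat_vec Mu algebra_simps)
  have "(q \<cdot>\<^sub>m (N * M) - q' \<cdot>\<^sub>m (M * N)) *\<^sub>v u = q \<cdot>\<^sub>v (N *\<^sub>v (M *\<^sub>v u)) - q' \<cdot>\<^sub>v (M *\<^sub>v (N *\<^sub>v u))"
    using M N u by (simp add: minus_mult_distrib_mat_vec[of _ n n] smult_mat_mult_vec[of _ n n]
        assoc_mult_mat_vec[of _ n n])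
  also have "\<dots> = (q - q') \<cdot>\<^sub>v u + (q \<cdot>\<^sub>v (N *\<^sub>v w) - (q' * \<mu>) \<cdot>\<^sub>v w)"
    using u w N by (intro eq_vecI) (auto simp: NMu MNu algebra_simps)
  also have "\<dots> = (q - q') \<cdot>\<^sub>v u"
    unfolding rest[folded w_def] using u w by (intro eq_vecI) auto
  finally have "(q \<cdot>\<^sub>m (N * M) - q' \<cdot>\<^sub>m (M * N)) *\<^sub>v u = (q - q') \<cdot>\<^sub>v u" .
  moreover have "q \<cdot>\<^sub>m (N * M) - q' \<cdot>\<^sub>m (M * N) \<in> carrier_mat n n" using M N by auto
  ultimately show ?thesis
    using u qq' by (simp add: smult_mat_mult_vec smult_smult_assoc)
qed

subsection \<open>Subspaces and their sums\<close>

lemma subspace_ofD: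
  assumes "subspace_of n S"
  shows "S \<subseteq> carrier_vec n" "0\<^sub>v n \<in> S" "u \<in> S \<Longrightarrow> w \<in> S \<Longrightarrow> u + w \<in> S" "u \<in> S \<Longrightarrow> c \<cdot>\<^sub>v u \<in> S"
  using assms unfolding subspace_of_def by auto

lemma subspace_of_diff:
  assumes S: "subspace_of n S" and "u \<in> S" "w \<in> S"
  shows "u - w \<in> S"
proof -
  have "u - w = u + (-1) \<cdot>\<^sub>v w"
    using assms subspace_ofD(1)[OF S] by (intro eq_vecI) auto
  then show ?thesis using assms subspace_ofD[OF S] by metis
qed

lemma subspace_sum_subset:
  assumes "0\<^sub>v n \<in> S" "\<And>x y. x \<in> S \<Longrightarrow> y \<in> S \<Longrightarrow> x + y \<in> S" "\<And>j. j \<in> set js \<Longrightarrow> W j \<subseteq> S"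
  shows "subspace_sum n W js \<subseteq> S"
  using assms(3)
proof (induction js)
  case (Cons j js)
  then show ?case using assms(2) by fastforce
qed (simp add: assms(1))

lemma subspace_of_subspace_sum:
  assumes "\<And>j. j \<in> set js \<Longrightarrow> subspace_of n (W j)"
  shows "subspace_of n (subspace_sum n W js)"
  using assms
proof (induction js)
  case Nil
  then show ?case unfolding subspace_of_def by auto
next
  case (Cons k js)
  have Wk: "subspace_of n (W k)" and IH: "subspace_of n (subspace_sum n W js)"
    using Cons by auto
  note cW = subspace_ofD(1)[OF Wk] and cIH = subspace_ofD(1)[OF IH]
  let ?S = "subspace_sum n W (k # js)"
  have "?S \<subseteq> carrier_vec n" using cW cIH by (fastforce intro: add_carrier_vec)
  moreover have "0\<^sub>v n \<in> ?S"
    using subspace_ofD(2)[OF Wk] subspace_ofD(2)[OF IH] by force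
  moreover have "u + w \<in> ?S" if uw: "u \<in> ?S" "w \<in> ?S" for u w
  proof -
    obtain a b c e where ab: "u = a + b" "a \<in> W k" "b \<in> subspace_sum n W js"
      and ce: "w = c + e" "c \<in> W k" "e \<in> subspace_sum n W js"
      using uw by auto
    have "a \<in> carrier_vec n" "b \<in> carrier_vec n" "c \<in> carrier_vec n" "e \<in> carrier_vec n"
      using ab ce cW cIH by auto
    then have "u + w = (a + c) + (b + e)"
      using ab ce by (intro eq_vecI) auto
    moreover have "a + c \<in> W k" "b + e \<in> subspace_sum n W js"
      using ab ce subspace_ofD(3)[OF Wk] subspace_ofD(3)[OF IH] by auto
    ultimately show ?thesis by auto
  qed
  moreover have "c \<cdot>\<^sub>v u \<in> ?S" if u: "u \<in> ?S" for c u
  proof -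
    obtain a b where ab: "u = a + b" "a \<in> W k" "b \<in> subspace_sum n W js" using u by auto
    have "a \<in> carrier_vec n" "b \<in> carrier_vec n" using ab cW cIH by auto
    then have "c \<cdot>\<^sub>v u = c \<cdot>\<^sub>v a + c \<cdot>\<^sub>v b"
      using ab by (intro eq_vecI) (auto simp: algebra_simps)
    moreover have "c \<cdot>\<^sub>v a \<in> W k" "c \<cdot>\<^sub>v b \<in> subspace_sum n W js"
      using ab subspace_ofD(4)[OF Wk] subspace_ofD(4)[OF IH] by auto
    ultimately show ?thesis by auto
  qed
  ultimately show ?case unfolding subspace_of_def by blast
qed

lemma subspace_sum_summand:
  assumes "\<And>j. j \<in> set js \<Longrightarrow> subspace_of n (W j)" "j \<in> set js"
  shows "W j \<subseteq> subspace_sum n W js"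
  using assms
proof (induction js)
  case (Cons k js)
  have W: "subspace_of n (W j)" "subspace_of n (W k)" "subspace_of n (subspace_sum n W js)"
    using Cons.prems by (auto intro: subspace_of_subspace_sum)
  show ?case
  proof
    fix w assume w: "w \<in> W j"
    then have wc: "w \<in> carrier_vec n" using subspace_ofD(1)[OF W(1)] by auto
    show "w \<in> subspace_sum n W (k # js)"
    proof (cases "j = k")
      case True
      have "w = w + 0\<^sub>v n" using wc by simp
      then show ?thesis using True w subspace_ofD(2)[OF W(3)] by auto
    next
      case False
      then have "w \<in> subspace_sum n W js" using Cons w by auto
      moreover have "w = 0\<^sub>v n + w" using wc by simp
      ultimately show ?thesis using subspace_ofD(2)[OF W(2)] by auto
    qed
  qed
qed simp

lemma subspace_sum_mono:
  assumes "\<And>j. j \<in> set ks \<Longrightarrow> subspace_of n (W j)" "set js \<subseteq> set ks"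
  shows "subspace_sum n W js \<subseteq> subspace_sum n W ks"
proof (rule subspace_sum_subset)
  have "subspace_of n (subspace_sum n W ks)" using assms(1) by (rule subspace_of_subspace_sum)
  then show "0\<^sub>v n \<in> subspace_sum n W ks" "\<And>x y. x \<in> subspace_sum n W ks \<Longrightarrow>
      y \<in> subspace_sum n W ks \<Longrightarrow> x + y \<in> subspace_sum n W ks"
    by (auto dest: subspace_ofD)
qed (use assms subspace_sum_summand in blast)

lemma subspace_of_mat_image:
  assumes M: "M \<in> carrier_mat n n"
  shows "subspace_of n (mat_image n M)"
  unfolding subspace_of_def mat_image_def
proof (intro conjI ballI allI)
  show "0\<^sub>v n \<in> {M *\<^sub>v v |v. v \<in> carrier_vec n}"
    using M by (auto intro!: exI[of _ "0\<^sub>v n"])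
  fix u w c assume "u \<in> {M *\<^sub>v v |v. v \<in> carrier_vec n}" "w \<in> {M *\<^sub>v v |v. v \<in> carrier_vec n}"
  then obtain x y where "u = M *\<^sub>v x" "w = M *\<^sub>v y" "x \<in> carrier_vec n" "y \<in> carrier_vec n"
    by auto
  then show "u + w \<in> {M *\<^sub>v v |v. v \<in> carrier_vec n}"
    using M by (auto simp: mult_add_distrib_mat_vec intro!: exI[of _ "x + y"])
  show "c \<cdot>\<^sub>v u \<in> {M *\<^sub>v v |v. v \<in> carrier_vec n}"
    using \<open>u = M *\<^sub>v x\<close> \<open>x \<in> carrier_vec n\<close> M
    by (auto simp: mult_mat_vec intro!: exI[of _ "c \<cdot>\<^sub>v x"])
qed (use M in auto)

lemma mat_image_mem: "x \<in> carrier_vec n \<Longrightarrow> M *\<^sub>v x \<in> mat_image n M"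
  unfolding mat_image_def by auto

lemma subspace_sum_eigen_shift:
  assumes M: "M \<in> carrier_mat n n"
    and W: "\<And>j. j \<in> set js \<Longrightarrow> subspace_of n (W j)"
    and eig: "\<And>j w. j \<in> set js \<Longrightarrow> w \<in> W j \<Longrightarrow> M *\<^sub>v w = \<theta> j \<cdot>\<^sub>v w"
    and v: "v \<in> subspace_sum n W js"
  shows "M *\<^sub>v v - \<theta> i \<cdot>\<^sub>v v \<in> subspace_sum n W (removeAll i js)"
  using W eig v
proof (induction js arbitrary: v)
  case Nil
  then show ?case using M by (auto intro!: eq_vecI)
next
  case (Cons j js)
  obtain w u where v: "v = w + u" and w: "w \<in> W j" and u: "u \<in> subspace_sum n W js"
    using Cons.prems(3) by auto
  have Wj: "subspace_of n (W j)" using Cons.prems(1) by simp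
  have wc: "w \<in> carrier_vec n" using w subspace_ofD(1)[OF Wj] by auto
  have uc: "u \<in> carrier_vec n"
    using u subspace_ofD(1)[OF subspace_of_subspace_sum, of js n W] Cons.prems(1) by auto
  have IH: "M *\<^sub>v u - \<theta> i \<cdot>\<^sub>v u \<in> subspace_sum n W (removeAll i js)"
    using Cons u by simp
  have "M *\<^sub>v v = \<theta> j \<cdot>\<^sub>v w + M *\<^sub>v u"
    using Cons.prems(2)[of j w] w by (simp add: v mult_add_distrib_mat_vec[OF M wc uc])
  then have split: "M *\<^sub>v v - \<theta> i \<cdot>\<^sub>v v = (\<theta> j - \<theta> i) \<cdot>\<^sub>v w + (M *\<^sub>v u - \<theta> i \<cdot>\<^sub>v u)"
    using wc uc M by (intro eq_vecI) (simp_all add: v algebra_simps)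
  show ?case
  proof (cases "j = i")
    case True
    have "M *\<^sub>v v - \<theta> i \<cdot>\<^sub>v v = M *\<^sub>v u - \<theta> i \<cdot>\<^sub>v u"
      unfolding split using True wc uc M by (intro eq_vecI) simp_all
    then show ?thesis using True IH by simp
  next
    case False
    have "(\<theta> j - \<theta> i) \<cdot>\<^sub>v w \<in> W j" using w subspace_ofD(4)[OF Wj] by blast
    moreover have "removeAll i (j # js) = j # removeAll i js" using False by simp
    ultimately show ?thesis unfolding split using IH by (simp only: subspace_sum.simps) blast
  qed
qed

lemma mult_subspace_sum_mem:
  assumes M: "M \<in> carrier_mat n n" and T: "subspace_of n T"
    and W: "\<And>j. j \<in> set js \<Longrightarrow> W j \<subseteq> carrier_vec n"
    and maps: "\<And>j w. j \<in> set js \<Longrightarrow> w \<in> W j \<Longrightarrow> M *\<^sub>v w \<in> T"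
    and v: "v \<in> subspace_sum n W js"
  shows "M *\<^sub>v v \<in> T"
proof -
  have "subspace_sum n W js \<subseteq> {v \<in> carrier_vec n. M *\<^sub>v v \<in> T}"
  proof (rule subspace_sum_subset)
    show "0\<^sub>v n \<in> {v \<in> carrier_vec n. M *\<^sub>v v \<in> T}"
      using M subspace_ofD(2)[OF T] by (simp add: mult_mat_vec_zero)
    show "x + y \<in> {v \<in> carrier_vec n. M *\<^sub>v v \<in> T}"
      if "x \<in> {v \<in> carrier_vec n. M *\<^sub>v v \<in> T}" "y \<in> {v \<in> carrier_vec n. M *\<^sub>v v \<in> T}" for x y
      using that M subspace_ofD(3)[OF T] by (auto simp: mult_add_distrib_mat_vec)
    show "W j \<subseteq> {v \<in> carrier_vec n. M *\<^sub>v v \<in> T}" if "j \<in> set js" for j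
      using that maps W by blast
  qed
  then show ?thesis using v by blast
qed

lemma invariant_under_subspace_sum:
  assumes M: "M \<in> carrier_mat n n" and W: "\<And>j. j \<in> set js \<Longrightarrow> subspace_of n (W j)"
    and shift: "\<And>j w. j \<in> set js \<Longrightarrow> w \<in> W j \<Longrightarrow> M *\<^sub>v w - c j \<cdot>\<^sub>v w \<in> subspace_sum n W js"
  shows "invariant_under n M (subspace_sum n W js)"
  unfolding invariant_under_def
proof
  let ?T = "subspace_sum n W js"
  have T: "subspace_of n ?T" using W by (rule subspace_of_subspace_sum)
  fix v assume v: "v \<in> ?T"
  show "M *\<^sub>v v \<in> ?T"
  proof (rule mult_subspace_sum_mem[OF M T _ _ v])
    show "W j \<subseteq> carrier_vec n" if "j \<in> set js" for j using subspace_ofD(1)[OF W[OF that]] .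
    fix j w assume j: "j \<in> set js" and w: "w \<in> W j"
    have "w \<in> carrier_vec n" using w subspace_ofD(1)[OF W[OF j]] by blast
    then have eq: "(M *\<^sub>v w - c j \<cdot>\<^sub>v w) + c j \<cdot>\<^sub>v w = M *\<^sub>v w" using M by (intro eq_vecI) auto
    have "c j \<cdot>\<^sub>v w \<in> ?T"
      using subspace_ofD(4)[OF T] subspace_sum_summand[where W = W, OF W j] w by blast
    then have "(M *\<^sub>v w - c j \<cdot>\<^sub>v w) + c j \<cdot>\<^sub>v w \<in> ?T"
      by (rule subspace_ofD(3)[OF T shift[OF j w]])
    then show "M *\<^sub>v w \<in> ?T" unfolding eq .
  qed
qed

lemma mat_eq_one_if_fixes_summands:
  assumes N: "N \<in> carrier_mat n n" and span: "subspace_sum n W js = carrier_vec n"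
    and W: "\<And>j. j \<in> set js \<Longrightarrow> W j \<subseteq> carrier_vec n"
    and fixed: "\<And>j w. j \<in> set js \<Longrightarrow> w \<in> W j \<Longrightarrow> N *\<^sub>v w = w"
  shows "N = (1\<^sub>m n :: 'a::field mat)"
proof -
  have "subspace_sum n W js \<subseteq> {v \<in> carrier_vec n. N *\<^sub>v v = v}"
  proof (rule subspace_sum_subset)
    show "x + y \<in> {v \<in> carrier_vec n. N *\<^sub>v v = v}"
      if "x \<in> {v \<in> carrier_vec n. N *\<^sub>v v = v}" "y \<in> {v \<in> carrier_vec n. N *\<^sub>v v = v}" for x y
      using that N by (simp add: mult_add_distrib_mat_vec)
    show "W j \<subseteq> {v \<in> carrier_vec n. N *\<^sub>v v = v}" if "j \<in> set js" for j
      using that W fixed by blast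
  qed (simp add: mult_mat_vec_zero[OF N])
  then have fixes_all: "N *\<^sub>v v = v" if "v \<in> carrier_vec n" for v
    using that span by blast
  show ?thesis
  proof (rule mat_eq_on_basis[of "1\<^sub>m n" n "1\<^sub>m n"])
    show "N *\<^sub>v col (1\<^sub>m n) k = 1\<^sub>m n *\<^sub>v col (1\<^sub>m n) k" if "k < n" for k
      using that fixes_all[of "unit_vec n k"] by simp
  qed (simp_all add: N)
qed

subsection \<open>Primitive idempotents\<close>

definition mat_sum :: "nat \<Rightarrow> (nat \<Rightarrow> 'a::field mat) \<Rightarrow> nat list \<Rightarrow> 'a mat" where
  "mat_sum n F js = foldr (\<lambda>j M. F j + M) js (0\<^sub>m n n)"

lemma mat_sum_carrier:
  "(\<And>j. j \<in> set js \<Longrightarrow> F j \<in> carrier_mat n n) \<Longrightarrow> mat_sum n F js \<in> carrier_mat n n"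
  by (induction js) (auto simp: mat_sum_def)

lemma mat_sum_mult_vec_mem:
  assumes "\<And>j. j \<in> set js \<Longrightarrow> F j \<in> carrier_mat n n" and v: "v \<in> carrier_vec n"
  shows "mat_sum n F js *\<^sub>v v \<in> subspace_sum n (\<lambda>j. {F j *\<^sub>v v}) js"
  using assms(1)
proof (induction js)
  case Nil
  then show ?case using v by (auto simp: mat_sum_def intro!: eq_vecI)
next
  case (Cons j js)
  have "mat_sum n F (j # js) *\<^sub>v v = F j *\<^sub>v v + mat_sum n F js *\<^sub>v v"
    using Cons.prems mat_sum_carrier[of js F n] v
    by (simp add: mat_sum_def add_mult_distrib_mat_vec[of _ n n])
  then show ?case using Cons by auto
qed

lemma mat_sum_mult_vec_single:
  assumes "distinct js" "i \<in> set js" "\<And>j. j \<in> set js \<Longrightarrow> F j \<in> carrier_mat n n"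
    and "F i *\<^sub>v v = v" "\<And>j. j \<in> set js \<Longrightarrow> j \<noteq> i \<Longrightarrow> F j *\<^sub>v v = 0\<^sub>v n"
    and v: "v \<in> carrier_vec n"
  shows "mat_sum n F js *\<^sub>v v = v"
  using assms(1-5)
proof (induction js)
  case (Cons k js)
  have Fk: "F k \<in> carrier_mat n n" and Fs: "mat_sum n F js \<in> carrier_mat n n"
    using Cons.prems(3) by (auto intro: mat_sum_carrier)
  have "mat_sum n F (k # js) *\<^sub>v v = F k *\<^sub>v v + mat_sum n F js *\<^sub>v v"
    using add_mult_distrib_mat_vec[OF Fk Fs v] by (simp add: mat_sum_def)
  moreover have "mat_sum n F js *\<^sub>v v = 0\<^sub>v n" if "k = i"
  proof -
    have "mat_sum n F js *\<^sub>v v \<in> subspace_sum n (\<lambda>j. {F j *\<^sub>v v}) js"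
      using Cons.prems(3) v by (intro mat_sum_mult_vec_mem) auto
    also have "\<dots> \<subseteq> {0\<^sub>v n}"
      by (rule subspace_sum_subset) (use that Cons.prems in auto)
    finally show ?thesis by simp
  qed
  ultimately show ?case using Cons v by (cases "k = i") auto
qed simp

lemma mat_prod_list_carrier:
  "(\<And>j. j \<in> set xs \<Longrightarrow> f j \<in> carrier_mat n n) \<Longrightarrow> mat_prod_list n f xs \<in> carrier_mat n n"
  by (induction xs) (auto simp: mat_prod_list_def intro!: mult_carrier_mat[of _ n n])

lemma mat_prod_list_mult_eigenvector:
  assumes "\<And>j. j \<in> set xs \<Longrightarrow> f j \<in> carrier_mat n n" "\<And>j. j \<in> set xs \<Longrightarrow> f j *\<^sub>v v = c j \<cdot>\<^sub>v v"
    and v: "v \<in> carrier_vec n"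
  shows "mat_prod_list n f xs *\<^sub>v v = prod_list (map c xs) \<cdot>\<^sub>v (v :: 'a::field vec)"
  using assms(1,2)
proof (induction xs)
  case Nil
  then show ?case using v by (auto simp: mat_prod_list_def intro!: eq_vecI)
next
  case (Cons j xs)
  have fj: "f j \<in> carrier_mat n n" and P: "mat_prod_list n f xs \<in> carrier_mat n n"
    using Cons.prems by (auto intro: mat_prod_list_carrier)
  have "mat_prod_list n f (j # xs) *\<^sub>v v = f j *\<^sub>v (prod_list (map c xs) \<cdot>\<^sub>v v)"
    using assoc_mult_mat_vec[OF fj P v] Cons by (simp add: mat_prod_list_def)
  also have "\<dots> = prod_list (map c (j # xs)) \<cdot>\<^sub>v v"
    using mult_mat_vec[OF fj v] Cons.prems(2)[of j] v by (auto intro!: eq_vecI)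
  finally show ?case .
qed

lemma prim_idem_carrier: "A \<in> carrier_mat n n \<Longrightarrow> prim_idem n A th d j \<in> carrier_mat n n"
  unfolding prim_idem_def by (intro mat_prod_list_carrier) auto

lemma prim_idem_mult_eigenvector:
  assumes A: "A \<in> carrier_mat n n" and inj: "inj_on th {0..d}" and ij: "i \<le> d" "j \<le> d"
    and v: "v \<in> carrier_vec n" and Av: "A *\<^sub>v v = th i \<cdot>\<^sub>v v"
  shows "prim_idem n A th d j *\<^sub>v v = (if j = i then v else 0\<^sub>v n)"
proof -
  let ?xs = "filter (\<lambda>k. k \<noteq> j) [0..<Suc d]"
  let ?c = "\<lambda>k. (th i - th k) / (th j - th k)"
  have "prim_idem n A th d j *\<^sub>v v = prod_list (map ?c ?xs) \<cdot>\<^sub>v v"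
    unfolding prim_idem_def
  proof (rule mat_prod_list_mult_eigenvector[OF _ _ v])
    fix k
    have "(A - th k \<cdot>\<^sub>m 1\<^sub>m n) *\<^sub>v v = A *\<^sub>v v - (th k \<cdot>\<^sub>m 1\<^sub>m n) *\<^sub>v v"
      by (rule minus_mult_distrib_mat_vec) (use A v in auto)
    also have "\<dots> = (th i - th k) \<cdot>\<^sub>v v"
      using Av v by (intro eq_vecI) (auto simp: smult_mat_mult_vec[of _ n n] algebra_simps)
    finally have "(A - th k \<cdot>\<^sub>m 1\<^sub>m n) *\<^sub>v v = (th i - th k) \<cdot>\<^sub>v v" .
    moreover have "A - th k \<cdot>\<^sub>m 1\<^sub>m n \<in> carrier_mat n n" using A by auto
    ultimately show "(1 / (th j - th k) \<cdot>\<^sub>m (A - th k \<cdot>\<^sub>m 1\<^sub>m n)) *\<^sub>v v = ?c k \<cdot>\<^sub>v v"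
      using v by (simp add: smult_mat_mult_vec smult_smult_assoc)
  qed (use A in auto)
  also have "prod_list (map ?c ?xs) = (if j = i then 1 else 0)"
  proof (cases "j = i")
    case True
    have "th j \<noteq> th k" if "k \<in> set ?xs" for k
      using that inj ij unfolding inj_on_def by (auto simp del: upt_Suc)
    then show ?thesis using True by (auto intro: prod_list_neutral)
  next
    case False
    then have "i \<in> set ?xs" using ij by auto
    then show ?thesis using False by (auto simp: prod_list_zero_iff)
  qed
  finally show ?thesis using v by auto
qed

subsection \<open>Spectral decomposition of a diagonalizable matrix\<close>

locale diag_spectrum =
  fixes n d :: nat and A :: "'a::field mat" and th :: "nat \<Rightarrow> 'a"
  assumes carrier: "A \<in> carrier_mat n n"
    and diagonalizable: "diagonalizable A"
    and inj: "inj_on th {0..d}"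
    and eigenvalues: "{e. eigenvalue A e} = th ` {0..d}"
begin

lemma eigenbasis:
  obtains P Q where "P \<in> carrier_mat n n" "Q \<in> carrier_mat n n" "P * Q = 1\<^sub>m n"
    "\<And>k. k < n \<Longrightarrow> \<exists>i\<le>d. A *\<^sub>v col P k = th i \<cdot>\<^sub>v col P k"
proof -
  obtain D P Q where w: "similar_mat_wit A D P Q" and D: "diagonal_mat D"
    using diagonalizable unfolding diagonalizable_def similar_mat_def by auto
  have cr: "D \<in> carrier_mat n n" "P \<in> carrier_mat n n" "Q \<in> carrier_mat n n"
    and PQ: "P * Q = 1\<^sub>m n" and QP: "Q * P = 1\<^sub>m n" and AD: "A = P * D * Q"
    using w carrier unfolding similar_mat_wit_def Let_def by auto
  have "\<exists>i\<le>d. A *\<^sub>v col P k = th i \<cdot>\<^sub>v col P k" if k: "k < n" for k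
  proof -
    let ?e = "unit_vec n k"
    have cP: "col P k = P *\<^sub>v ?e" using cr(2) k by (intro eq_vecI) auto
    have cc: "col P k \<in> carrier_vec n" using cr k by auto
    have Qc: "Q *\<^sub>v col P k = ?e"
      unfolding cP using assoc_mult_mat_vec[OF cr(3) cr(2), of ?e] QP by simp
    have "D *\<^sub>v ?e = col D k" using cr(1) k by (intro eq_vecI) auto
    also have "\<dots> = D $$ (k, k) \<cdot>\<^sub>v ?e"
      using D cr(1) k unfolding diagonal_mat_def by (intro eq_vecI) auto
    finally have De: "D *\<^sub>v ?e = D $$ (k, k) \<cdot>\<^sub>v ?e" .
    have "A *\<^sub>v col P k = (P * D) *\<^sub>v (Q *\<^sub>v col P k)"
      unfolding AD by (rule assoc_mult_mat_vec) (use cr cc in auto)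
    also have "\<dots> = P *\<^sub>v (D *\<^sub>v (Q *\<^sub>v col P k))"
      by (rule assoc_mult_mat_vec) (use cr cc in auto)
    also have "\<dots> = D $$ (k, k) \<cdot>\<^sub>v col P k"
      by (simp add: Qc De mult_mat_vec[OF cr(2) unit_vec_carrier] cP[symmetric])
    finally have Ac: "A *\<^sub>v col P k = D $$ (k, k) \<cdot>\<^sub>v col P k" .
    have "col P k \<noteq> 0\<^sub>v n"
      using Qc k unit_vec_nonzero[of k n] mult_mat_vec_zero[OF cr(3)] by metis
    then have "eigenvalue A (D $$ (k, k))"
      unfolding eigenvalue_def eigenvector_def using Ac carrier cc by auto
    then have "D $$ (k, k) \<in> th ` {0..d}" using eigenvalues by blast
    then show ?thesis using Ac by force
  qed
  then show ?thesis using that cr PQ by blast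
qed

lemma mult_prim_idem: "j \<le> d \<Longrightarrow> A * prim_idem n A th d j = th j \<cdot>\<^sub>m prim_idem n A th d j"
proof -
  assume j: "j \<le> d"
  obtain P Q where PQ: "P \<in> carrier_mat n n" "Q \<in> carrier_mat n n" "P * Q = 1\<^sub>m n"
    and eig: "\<And>k. k < n \<Longrightarrow> \<exists>i\<le>d. A *\<^sub>v col P k = th i \<cdot>\<^sub>v col P k"
    using eigenbasis by blast
  note E = prim_idem_carrier[OF carrier, of th d j]
  show ?thesis
  proof (rule mat_eq_on_basis[OF PQ])
    fix k assume k: "k < n"
    obtain i where i: "i \<le> d" "A *\<^sub>v col P k = th i \<cdot>\<^sub>v col P k" using eig k by blast
    have c: "col P k \<in> carrier_vec n" using PQ k by auto
    show "A * prim_idem n A th d j *\<^sub>v col P k = th j \<cdot>\<^sub>m prim_idem n A th d j *\<^sub>v col P k"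
      using prim_idem_mult_eigenvector[OF carrier inj i(1) j c i(2)] i(2)
      by (auto simp: assoc_mult_mat_vec[OF carrier E c] smult_mat_mult_vec[OF E c]
          mult_mat_vec_zero[OF carrier] intro!: eq_vecI)
  qed (use carrier E in auto)
qed

lemma sum_prim_idem: "mat_sum n (prim_idem n A th d) [0..<Suc d] = 1\<^sub>m n"
proof -
  obtain P Q where PQ: "P \<in> carrier_mat n n" "Q \<in> carrier_mat n n" "P * Q = 1\<^sub>m n"
    and eig: "\<And>k. k < n \<Longrightarrow> \<exists>i\<le>d. A *\<^sub>v col P k = th i \<cdot>\<^sub>v col P k"
    using eigenbasis by blast
  note E = prim_idem_carrier[OF carrier]
  show ?thesis
  proof (rule mat_eq_on_basis[OF PQ])
    fix k assume k: "k < n"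
    obtain i where i: "i \<le> d" "A *\<^sub>v col P k = th i \<cdot>\<^sub>v col P k" using eig k by blast
    have c: "col P k \<in> carrier_vec n" using PQ k by auto
    have "mat_sum n (prim_idem n A th d) [0..<Suc d] *\<^sub>v col P k = col P k"
      using prim_idem_mult_eigenvector[OF carrier inj i(1) _ c i(2)] i(1) c E
      by (intro mat_sum_mult_vec_single[where i = i]) (auto simp del: upt_Suc)
    then show "mat_sum n (prim_idem n A th d) [0..<Suc d] *\<^sub>v col P k = 1\<^sub>m n *\<^sub>v col P k"
      using c by simp
  qed (use E in \<open>auto intro: mat_sum_carrier\<close>)
qed

lemma mem_if_prim_idem_mult_mem:
  assumes S: "0\<^sub>v n \<in> S" "\<And>x y. x \<in> S \<Longrightarrow> y \<in> S \<Longrightarrow> x + y \<in> S"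
    and y: "y \<in> carrier_vec n" and comps: "\<And>k. k \<le> d \<Longrightarrow> prim_idem n A th d k *\<^sub>v y \<in> S"
  shows "y \<in> S"
proof -
  have "y = mat_sum n (prim_idem n A th d) [0..<Suc d] *\<^sub>v y" using y by (simp only: sum_prim_idem one_mult_mat_vec)
  also have "\<dots> \<in> subspace_sum n (\<lambda>k. {prim_idem n A th d k *\<^sub>v y}) [0..<Suc d]"
    using y by (intro mat_sum_mult_vec_mem prim_idem_carrier carrier)
  also have "\<dots> \<subseteq> S"
    by (rule subspace_sum_subset) (use S comps in \<open>auto simp del: upt_Suc\<close>)
  finally show ?thesis .
qed

lemma eigenspace_prim_idem:
  assumes j: "j \<le> d" and u: "u \<in> mat_image n (prim_idem n A th d j)"
  shows "A *\<^sub>v u = th j \<cdot>\<^sub>v u"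
proof -
  note E = prim_idem_carrier[OF carrier, of th d j]
  obtain x where x: "x \<in> carrier_vec n" "u = prim_idem n A th d j *\<^sub>v x"
    using u unfolding mat_image_def by auto
  show ?thesis
    using x mult_prim_idem[OF j] assoc_mult_mat_vec[OF carrier E x(1)] smult_mat_mult_vec[OF E x(1)]
    by simp
qed

lemma subspace_prim_idem_image: "subspace_of n (mat_image n (prim_idem n A th d j))"
  by (rule subspace_of_mat_image[OF prim_idem_carrier[OF carrier]])

lemma mult_prim_idem_image_subset:
  assumes M: "M \<in> carrier_mat n n"
    and vanish: "\<And>k. k \<le> d \<Longrightarrow> k \<notin> set ks \<Longrightarrow> prim_idem n A th d k * M * prim_idem n A th d j = 0\<^sub>m n n"
    and u: "u \<in> mat_image n (prim_idem n A th d j)"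
  shows "M *\<^sub>v u \<in> subspace_sum n (\<lambda>k. mat_image n (prim_idem n A th d k)) ks"
proof -
  let ?E = "prim_idem n A th d" and ?T = "subspace_sum n (\<lambda>k. mat_image n (prim_idem n A th d k)) ks"
  have E: "\<And>k. ?E k \<in> carrier_mat n n" by (rule prim_idem_carrier[OF carrier])
  have T: "subspace_of n ?T" by (intro subspace_of_subspace_sum subspace_prim_idem_image)
  obtain x where x: "x \<in> carrier_vec n" "u = ?E j *\<^sub>v x" using u unfolding mat_image_def by auto
  have Mu: "M *\<^sub>v u \<in> carrier_vec n"
    using mult_mat_vec_carrier[OF M mult_mat_vec_carrier[OF E x(1)]] x(2) by simp
  show ?thesis
  proof (rule mem_if_prim_idem_mult_mem[OF subspace_ofD(2,3)[OF T] Mu])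
    fix k assume k: "k \<le> d"
    show "?E k *\<^sub>v (M *\<^sub>v u) \<in> ?T"
    proof (cases "k \<in> set ks")
      case True
      then show ?thesis
        using subspace_sum_summand[of ks n "\<lambda>k. mat_image n (?E k)"] mat_image_mem[OF Mu]
        by (auto intro: subspace_prim_idem_image)
    next
      case False
      have "(?E k * M * ?E j) *\<^sub>v x = (?E k * M) *\<^sub>v u"
        unfolding x(2) by (rule assoc_mult_mat_vec) (use E M x(1) in auto)
      also have "\<dots> = ?E k *\<^sub>v (M *\<^sub>v u)"
        by (rule assoc_mult_mat_vec) (use E M x mult_mat_vec_carrier[OF E x(1)] in auto)
      finally have "?E k *\<^sub>v (M *\<^sub>v u) = (?E k * M * ?E j) *\<^sub>v x" ..
      also have "\<dots> = 0\<^sub>v n" using vanish[OF k False] x(1) by (auto intro!: eq_vecI)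
      finally show ?thesis using subspace_ofD(2)[OF T] by simp
    qed
  qed
qed

end

subsection \<open>The split decomposition of a tridiagonal system\<close>

locale td_system =
  fixes n d :: nat and A :: "'a::field mat" and th :: "nat \<Rightarrow> 'a" and As :: "'a mat"
    and ths :: "nat \<Rightarrow> 'a"
  assumes tridiagonal: "tridiagonal_system n d A th As ths"

sublocale td_system \<subseteq> A: diag_spectrum n d A th
  by unfold_locales (use tridiagonal in \<open>auto simp: tridiagonal_system_def\<close>)

sublocale td_system \<subseteq> As: diag_spectrum n d As ths
  by unfold_locales (use tridiagonal in \<open>auto simp: tridiagonal_system_def\<close>)

context td_system
begin

abbreviation E where "E \<equiv> prim_idem n A th d"
abbreviation Es where "Es \<equiv> prim_idem n As ths d"
abbreviation lower_sum where "lower_sum i \<equiv> subspace_sum n (\<lambda>j. mat_image n (Es j)) [0..<Suc i]"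
abbreviation upper_sum where "upper_sum i \<equiv> subspace_sum n (\<lambda>j. mat_image n (E j)) [i..<Suc d]"
abbreviation U where "U i \<equiv> split_component n d A th As ths i"

lemma irreducible:
  "subspace_of n W \<Longrightarrow> invariant_under n A W \<Longrightarrow> invariant_under n As W \<Longrightarrow>
    W = {0\<^sub>v n} \<or> W = carrier_vec n"
  using tridiagonal unfolding tridiagonal_system_def by blast

lemma split_component_eq: "U i = lower_sum i \<inter> upper_sum i"
  unfolding split_component_def ..

lemma subspace_lower_sum: "subspace_of n (lower_sum i)"
  by (intro subspace_of_subspace_sum As.subspace_prim_idem_image)

lemma subspace_upper_sum: "subspace_of n (upper_sum i)"
  by (intro subspace_of_subspace_sum A.subspace_prim_idem_image)

lemma subspace_split_component: "subspace_of n (U i)"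
  using subspace_lower_sum[of i] subspace_upper_sum[of i]
  unfolding split_component_eq subspace_of_def by auto

lemma lower_sum_mono: "i \<le> i' \<Longrightarrow> lower_sum i \<subseteq> lower_sum i'"
  by (intro subspace_sum_mono As.subspace_prim_idem_image) auto

lemma upper_sum_antimono: "i' \<le> i \<Longrightarrow> upper_sum i \<subseteq> upper_sum i'"
  by (intro subspace_sum_mono A.subspace_prim_idem_image) auto

lemma upper_sum_0: "upper_sum 0 = carrier_vec n"
proof
  show "upper_sum 0 \<subseteq> carrier_vec n" using subspace_ofD(1)[OF subspace_upper_sum] .
  show "carrier_vec n \<subseteq> upper_sum 0"
  proof
    fix y :: "'a vec" assume y: "y \<in> carrier_vec n"
    show "y \<in> upper_sum 0"
    proof (rule A.mem_if_prim_idem_mult_mem[OF subspace_ofD(2,3)[OF subspace_upper_sum] y])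
      show "E k *\<^sub>v y \<in> upper_sum 0" if "k \<le> d" for k
      proof -
        have "mat_image n (E k) \<subseteq> upper_sum 0"
          by (intro subspace_sum_summand A.subspace_prim_idem_image) (use that in auto)
        then show ?thesis using mat_image_mem[OF y] by blast
      qed
    qed
  qed
qed

lemma A_mult_lower_sum:
  assumes i: "i \<le> d" and u: "u \<in> lower_sum i"
  shows "A *\<^sub>v u \<in> lower_sum (Suc i)"
proof (rule mult_subspace_sum_mem[OF A.carrier subspace_lower_sum _ _ u])
  fix j w assume j: "j \<in> set [0..<Suc i]" and w: "w \<in> mat_image n (Es j)"
  have "A *\<^sub>v w \<in> lower_sum (Suc j)"
  proof (rule As.mult_prim_idem_image_subset[OF A.carrier _ w])
    fix k assume "k \<le> d" "k \<notin> set [0..<Suc (Suc j)]"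
    then show "Es k * A * Es j = 0\<^sub>m n n"
      using tridiagonal j i unfolding tridiagonal_system_def by auto
  qed
  then show "A *\<^sub>v w \<in> lower_sum (Suc i)" using lower_sum_mono[of "Suc j" "Suc i"] j by auto
qed (use subspace_ofD(1)[OF As.subspace_prim_idem_image] in auto)

lemma As_mult_upper_sum:
  assumes u: "u \<in> upper_sum (Suc i)"
  shows "As *\<^sub>v u \<in> upper_sum i"
proof (rule mult_subspace_sum_mem[OF As.carrier subspace_upper_sum _ _ u])
  fix j w assume j: "j \<in> set [Suc i..<Suc d]" and w: "w \<in> mat_image n (E j)"
  have "Suc i \<le> j" using j by (simp only: set_upt) auto
  then obtain j' where j': "j = Suc j'" "i \<le> j'" by (cases j) auto
  have "As *\<^sub>v w \<in> upper_sum j'"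
  proof (rule A.mult_prim_idem_image_subset[OF As.carrier _ w])
    fix k assume "k \<le> d" "k \<notin> set [j'..<Suc d]"
    then show "E k * As * E j = 0\<^sub>m n n"
      using tridiagonal j j' unfolding tridiagonal_system_def by auto
  qed
  then show "As *\<^sub>v w \<in> upper_sum i" using upper_sum_antimono[of i j'] j' by auto
qed (use subspace_ofD(1)[OF A.subspace_prim_idem_image] in auto)

lemma raising:
  assumes i: "i \<le> d" and u: "u \<in> U i"
  shows "A *\<^sub>v u - th i \<cdot>\<^sub>v u \<in> U (Suc i)"
proof -
  have "A *\<^sub>v u - th i \<cdot>\<^sub>v u \<in> subspace_sum n (\<lambda>j. mat_image n (E j)) (removeAll i [i..<Suc d])"
    using u unfolding split_component_eq
    by (intro subspace_sum_eigen_shift[OF A.carrier] A.subspace_prim_idem_image A.eigenspace_prim_idem)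
      auto
  moreover have "removeAll i [i..<Suc d] = [Suc i..<Suc d]"
    using i by (simp add: upt_conv_Cons del: upt_Suc)
  moreover have "A *\<^sub>v u \<in> lower_sum (Suc i)" "th i \<cdot>\<^sub>v u \<in> lower_sum (Suc i)"
    using u i A_mult_lower_sum lower_sum_mono[of i "Suc i"] subspace_ofD(4)[OF subspace_lower_sum]
    unfolding split_component_eq by (auto simp del: upt_Suc)
  then have "A *\<^sub>v u - th i \<cdot>\<^sub>v u \<in> lower_sum (Suc i)"
    by (intro subspace_of_diff[OF subspace_lower_sum])
  ultimately show ?thesis unfolding split_component_eq by (simp del: upt_Suc)
qed

lemma raising_top:
  assumes u: "u \<in> U d"
  shows "A *\<^sub>v u - th d \<cdot>\<^sub>v u = 0\<^sub>v n"
  using raising[OF order.refl u] unfolding split_component_eq by simp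

lemma lowering:
  assumes i: "Suc i \<le> d" and u: "u \<in> U (Suc i)"
  shows "As *\<^sub>v u - ths (Suc i) \<cdot>\<^sub>v u \<in> U i"
proof -
  have "As *\<^sub>v u - ths (Suc i) \<cdot>\<^sub>v u
      \<in> subspace_sum n (\<lambda>j. mat_image n (Es j)) (removeAll (Suc i) [0..<Suc (Suc i)])"
    using u i unfolding split_component_eq
    by (intro subspace_sum_eigen_shift[OF As.carrier] As.subspace_prim_idem_image
        As.eigenspace_prim_idem) auto
  moreover have "removeAll (Suc i) [0..<Suc (Suc i)] = [0..<Suc i]" by simp
  moreover have "As *\<^sub>v u \<in> upper_sum i" "ths (Suc i) \<cdot>\<^sub>v u \<in> upper_sum i"
    using u As_mult_upper_sum upper_sum_antimono[of i "Suc i"] subspace_ofD(4)[OF subspace_upper_sum]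
    unfolding split_component_eq by (auto simp del: upt_Suc)
  then have "As *\<^sub>v u - ths (Suc i) \<cdot>\<^sub>v u \<in> upper_sum i"
    by (intro subspace_of_diff[OF subspace_upper_sum])
  ultimately show ?thesis unfolding split_component_eq by (simp del: upt_Suc)
qed

lemma lowering_bottom:
  assumes u: "u \<in> U 0"
  shows "As *\<^sub>v u - ths 0 \<cdot>\<^sub>v u = 0\<^sub>v n"
proof -
  have "As *\<^sub>v u - ths 0 \<cdot>\<^sub>v u \<in> subspace_sum n (\<lambda>j. mat_image n (Es j)) (removeAll 0 [0..<Suc 0])"
    using u unfolding split_component_eq
    by (intro subspace_sum_eigen_shift[OF As.carrier] As.subspace_prim_idem_image
        As.eigenspace_prim_idem) auto
  then show ?thesis by simp
qed

abbreviation split_sum where "split_sum \<equiv> subspace_sum n U [0..<Suc d]"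

lemma subspace_split_sum: "subspace_of n split_sum"
  by (intro subspace_of_subspace_sum subspace_split_component)

lemma split_component_subset_split_sum: "i \<le> d \<Longrightarrow> U i \<subseteq> split_sum"
  by (intro subspace_sum_summand subspace_split_component) auto

lemma raising_mem_split_sum:
  assumes "i \<le> d" and "u \<in> U i"
  shows "A *\<^sub>v u - th i \<cdot>\<^sub>v u \<in> split_sum"
proof (cases "i = d")
  case True
  then show ?thesis using raising_top assms(2) subspace_ofD(2)[OF subspace_split_sum] by simp
next
  case False
  then show ?thesis using raising assms split_component_subset_split_sum[of "Suc i"] by auto
qed

lemma lowering_mem_split_sum:
  assumes "i \<le> d" and "u \<in> U i"
  shows "As *\<^sub>v u - ths i \<cdot>\<^sub>v u \<in> split_sum"
proof (cases i)
  case 0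
  then show ?thesis using lowering_bottom assms(2) subspace_ofD(2)[OF subspace_split_sum] by simp
next
  case (Suc i')
  then show ?thesis using lowering[of i' u] assms split_component_subset_split_sum[of i'] by auto
qed

lemma dual_eigenvector_mem_split_component_0:
  assumes v: "v \<in> carrier_vec n" "As *\<^sub>v v = ths 0 \<cdot>\<^sub>v v"
  shows "v \<in> U 0"
proof -
  have "Es 0 *\<^sub>v v = v"
    using prim_idem_mult_eigenvector[OF As.carrier As.inj _ _ v] by simp
  moreover have "mat_image n (Es 0) \<subseteq> lower_sum 0"
    by (intro subspace_sum_summand As.subspace_prim_idem_image) simp
  ultimately have "v \<in> lower_sum 0" using mat_image_mem[OF v(1), of "Es 0"] by auto
  then show ?thesis unfolding split_component_eq upper_sum_0 using v(1) by blast
qed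

lemma sum_split_components: "split_sum = carrier_vec n"
proof -
  have invA: "invariant_under n A split_sum"
    by (rule invariant_under_subspace_sum[OF A.carrier subspace_split_component, where c = th])
      (simp add: raising_mem_split_sum del: upt_Suc)
  have invAs: "invariant_under n As split_sum"
    by (rule invariant_under_subspace_sum[OF As.carrier subspace_split_component, where c = ths])
      (simp add: lowering_mem_split_sum del: upt_Suc)
  have "ths 0 \<in> {e. eigenvalue As e}" unfolding As.eigenvalues by auto
  then obtain v where v: "v \<in> carrier_vec n" "v \<noteq> 0\<^sub>v n" "As *\<^sub>v v = ths 0 \<cdot>\<^sub>v v"
    using As.carrier unfolding eigenvalue_def eigenvector_def by auto
  then have "v \<in> split_sum"
    using dual_eigenvector_mem_split_component_0 split_component_subset_split_sum[of 0] by blast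
  then show ?thesis using irreducible[OF subspace_split_sum invA invAs] v(2) by blast
qed

lemma inverse_mult_split_component:
  assumes K: "K \<in> carrier_mat n n" and Kinv: "Kinv \<in> carrier_mat n n" and "Kinv * K = 1\<^sub>m n"
    and K_U: "\<And>i u. i \<le> d \<Longrightarrow> u \<in> U i \<Longrightarrow> K *\<^sub>v u = \<kappa> i \<cdot>\<^sub>v u"
    and "\<kappa> i \<noteq> 0" "i \<le> d" "u \<in> U i"
  shows "Kinv *\<^sub>v u = inverse (\<kappa> i) \<cdot>\<^sub>v u"
  using assms subspace_ofD(1)[OF subspace_split_component]
  by (intro inverse_mat_mult_eigenvector[OF K Kinv]) auto

lemma raising_q_commutator:
  assumes K: "K \<in> carrier_mat n n"
    and K_U: "\<And>i u. i \<le> d \<Longrightarrow> u \<in> U i \<Longrightarrow> K *\<^sub>v u = \<kappa> i \<cdot>\<^sub>v u"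
    and inv: "\<And>i. i \<le> d \<Longrightarrow> th i * \<kappa> i = 1"
    and step: "\<And>i. i < d \<Longrightarrow> q * \<kappa> (Suc i) = q' * \<kappa> i"
    and qq': "q \<noteq> q'"
  shows "(1 / (q - q')) \<cdot>\<^sub>m (q \<cdot>\<^sub>m (K * A) - q' \<cdot>\<^sub>m (A * K)) = 1\<^sub>m n"
proof (rule mat_eq_one_if_fixes_summands[OF _ sum_split_components])
  show "(1 / (q - q')) \<cdot>\<^sub>m (q \<cdot>\<^sub>m (K * A) - q' \<cdot>\<^sub>m (A * K)) \<in> carrier_mat n n"
    using K A.carrier by auto
  show "U i \<subseteq> carrier_vec n" for i by (rule subspace_ofD(1)[OF subspace_split_component])
  fix i u assume "i \<in> set [0..<Suc d]" and u: "u \<in> U i"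
  then have i: "i \<le> d" by (simp del: upt_Suc)
  have uc: "u \<in> carrier_vec n" using u subspace_ofD(1)[OF subspace_split_component] by blast
  have "q \<cdot>\<^sub>v (K *\<^sub>v (A *\<^sub>v u - th i \<cdot>\<^sub>v u)) = (q' * \<kappa> i) \<cdot>\<^sub>v (A *\<^sub>v u - th i \<cdot>\<^sub>v u)"
  proof (cases "i = d")
    case True
    then show ?thesis using raising_top u by (auto simp: mult_mat_vec_zero[OF K] intro!: eq_vecI)
  next
    case False
    then have "K *\<^sub>v (A *\<^sub>v u - th i \<cdot>\<^sub>v u) = \<kappa> (Suc i) \<cdot>\<^sub>v (A *\<^sub>v u - th i \<cdot>\<^sub>v u)"
      using i raising[OF i u] K_U[of "Suc i"] by simp
    then show ?thesis using step[of i] False i by (simp add: smult_smult_assoc)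
  qed
  then show "(1 / (q - q')) \<cdot>\<^sub>m (q \<cdot>\<^sub>m (K * A) - q' \<cdot>\<^sub>m (A * K)) *\<^sub>v u = u"
    by (rule q_commutator_mult_vec[OF A.carrier K uc K_U[OF i u] inv[OF i] qq'])
qed

lemma lowering_q_commutator:
  assumes N: "N \<in> carrier_mat n n"
    and N_U: "\<And>i u. i \<le> d \<Longrightarrow> u \<in> U i \<Longrightarrow> N *\<^sub>v u = \<nu> i \<cdot>\<^sub>v u"
    and inv: "\<And>i. i \<le> d \<Longrightarrow> ths i * \<nu> i = 1"
    and step: "\<And>i. i < d \<Longrightarrow> q * \<nu> i = q' * \<nu> (Suc i)"
    and qq': "q \<noteq> q'"
  shows "(1 / (q - q')) \<cdot>\<^sub>m (q \<cdot>\<^sub>m (N * As) - q' \<cdot>\<^sub>m (As * N)) = 1\<^sub>m n"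
proof (rule mat_eq_one_if_fixes_summands[OF _ sum_split_components])
  show "(1 / (q - q')) \<cdot>\<^sub>m (q \<cdot>\<^sub>m (N * As) - q' \<cdot>\<^sub>m (As * N)) \<in> carrier_mat n n"
    using N As.carrier by auto
  show "U i \<subseteq> carrier_vec n" for i by (rule subspace_ofD(1)[OF subspace_split_component])
  fix i u assume "i \<in> set [0..<Suc d]" and u: "u \<in> U i"
  then have i: "i \<le> d" by (simp del: upt_Suc)
  have uc: "u \<in> carrier_vec n" using u subspace_ofD(1)[OF subspace_split_component] by blast
  have "q \<cdot>\<^sub>v (N *\<^sub>v (As *\<^sub>v u - ths i \<cdot>\<^sub>v u)) = (q' * \<nu> i) \<cdot>\<^sub>v (As *\<^sub>v u - ths i \<cdot>\<^sub>v u)"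
  proof (cases i)
    case 0
    then show ?thesis using lowering_bottom u by (auto simp: mult_mat_vec_zero[OF N] intro!: eq_vecI)
  next
    case (Suc i')
    then have "N *\<^sub>v (As *\<^sub>v u - ths i \<cdot>\<^sub>v u) = \<nu> i' \<cdot>\<^sub>v (As *\<^sub>v u - ths i \<cdot>\<^sub>v u)"
      using i lowering[of i' u] u N_U[of i'] by simp
    then show ?thesis using step[of i'] Suc i by (simp add: smult_smult_assoc)
  qed
  then show "(1 / (q - q')) \<cdot>\<^sub>m (q \<cdot>\<^sub>m (N * As) - q' \<cdot>\<^sub>m (As * N)) *\<^sub>v u = u"
    by (rule q_commutator_mult_vec[OF As.carrier N uc N_U[OF i u] inv[OF i] qq'])
qed

end

lemma q_eigenvalue_relations:
  fixes q :: "'a::field"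
  assumes q: "q \<noteq> 0"
  shows "q powi (2 * int i - int d) * q powi (int d - 2 * int i) = 1"
    and "q powi (int d - 2 * int i) * q powi (2 * int i - int d) = 1"
    and "q * q powi (int d - 2 * int (Suc i)) = inverse q * q powi (int d - 2 * int i)"
    and "q * q powi (2 * int i - int d) = inverse q * q powi (2 * int (Suc i) - int d)"
    and "inverse (q powi (int d - 2 * int i)) = q powi (2 * int i - int d)"
proof -
  have shift: "q * q powi a = inverse q * q powi (a + 2)" for a :: int
    using q by (simp add: power_int_add power2_eq_square field_simps)
  show "q powi (2 * int i - int d) * q powi (int d - 2 * int i) = 1"
    and "q powi (int d - 2 * int i) * q powi (2 * int i - int d) = 1"
    using q by (simp_all flip: power_int_add)
  show "q * q powi (int d - 2 * int (Suc i)) = inverse q * q powi (int d - 2 * int i)"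
    using shift[of "int d - 2 * int (Suc i)"] by (simp add: algebra_simps)
  show "q * q powi (2 * int i - int d) = inverse q * q powi (2 * int (Suc i) - int d)"
    using shift[of "2 * int i - int d"] by (simp add: algebra_simps)
  show "inverse (q powi (int d - 2 * int i)) = q powi (2 * int i - int d)"
    by (simp flip: power_int_minus)
qed

theorem lemma7p1:
  fixes n d :: nat and q :: "'a::field" and A As K Kinv :: "'a mat"
  assumes "alg_closed_field TYPE('a)"
    and "n > 0"
    and "q \<noteq> 0" and "\<forall>m::nat. m > 0 \<longrightarrow> q ^ m \<noteq> 1"
    and "d \<ge> 1"
    and "tridiagonal_system n d A (\<lambda>i. q powi (2 * int i - int d))
                               As (\<lambda>i. q powi (int d - 2 * int i))"
    and "q_serre n q A As"
    and "K \<in> carrier_mat n n"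
    and "\<forall>i\<le>d. \<forall>u \<in> split_component n d A (\<lambda>i. q powi (2 * int i - int d))
                                   As (\<lambda>i. q powi (int d - 2 * int i)) i.
            K *\<^sub>v u = q powi (int d - 2 * int i) \<cdot>\<^sub>v u"
    and "Kinv \<in> carrier_mat n n" and "K * Kinv = 1\<^sub>m n" and "Kinv * K = 1\<^sub>m n"
  shows "(1 / (q - inverse q)) \<cdot>\<^sub>m (q \<cdot>\<^sub>m (K * A) - inverse q \<cdot>\<^sub>m (A * K)) = 1\<^sub>m n \<and>
         (1 / (q - inverse q)) \<cdot>\<^sub>m (q \<cdot>\<^sub>m (Kinv * As) - inverse q \<cdot>\<^sub>m (As * Kinv)) = 1\<^sub>m n"
proof -
  interpret td_system n d A "\<lambda>i. q powi (2 * int i - int d)" As "\<lambda>i. q powi (int d - 2 * int i)"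
    by unfold_locales (rule assms(6))
  note rel = q_eigenvalue_relations[OF assms(3)]
  have "q\<^sup>2 \<noteq> 1" using assms(4) by simp
  then have q_inv: "q \<noteq> inverse q" using assms(3) by (auto simp: power2_eq_square field_simps)
  have K_U: "K *\<^sub>v u = q powi (int d - 2 * int i) \<cdot>\<^sub>v u" if "i \<le> d" "u \<in> U i" for i u
    using assms(9) that by blast
  have Kinv_U: "Kinv *\<^sub>v u = q powi (2 * int i - int d) \<cdot>\<^sub>v u" if "i \<le> d" "u \<in> U i" for i u
    using inverse_mult_split_component[OF assms(8,10,12) K_U _ that] assms(3) by (simp add: rel)
  show ?thesis
  proof
    show "(1 / (q - inverse q)) \<cdot>\<^sub>m (q \<cdot>\<^sub>m (K * A) - inverse q \<cdot>\<^sub>m (A * K)) = 1\<^sub>m n"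
      by (rule raising_q_commutator[OF assms(8), where \<kappa> = "\<lambda>i. q powi (int d - 2 * int i)"])
        (fact q_inv | blast intro: K_U rel)+
    show "(1 / (q - inverse q)) \<cdot>\<^sub>m (q \<cdot>\<^sub>m (Kinv * As) - inverse q \<cdot>\<^sub>m (As * Kinv)) = 1\<^sub>m n"
      by (rule lowering_q_commutator[OF assms(10), where \<nu> = "\<lambda>i. q powi (2 * int i - int d)"])
        (fact q_inv | blast intro: Kinv_U rel)+
  qed
qed

end
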